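(* Let $1\le p<\infty$ and let $d_{w,p}$ be a Lorentz sequence space. The norm closure $\overline{J^{\ell_p}}$ of the set $J^{\ell_p}$ of operators in $L(d_{w,p})$ factoring through $\ell_p$ properly contains the ideal $\mathcal K(d_{w,p})$ of compact operators on $d_{w,p}$.
   Context: Let $1\le p<\infty$ and let $w=(w_n)$ be a real sequence with $w_1=1$, $w_n\downarrow 0$ and $\sum_n w_n=\infty$. The Lorentz sequence space $d_{w,p}$ is the Banach space of all $x=(x_n)\in c_0$ with $\|x\|_{d_{w,p}}=\big(\sum_{n}w_n (x^*_n)^p\big)^{1/p}<\infty$, where $(x^*_n)$ is the non-increasing rearrangement of $(|x_n|)$. An operator $T\in L(d_{w,p})$ factors through $\ell_p$ if $T=BA$ for some $A\in L(d_{w,p},\ell_p)$, $B\in L(\ell_p,d_{w,p})$; $J^{\ell_p}$ denotes the set of such operators. *)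

theory Defs
  imports "HOL-Analysis.Analysis"
begin

text \<open>Sequences are functions nat => real, indexed from 0 (so index n here
  corresponds to index n+1 in the paper).\<close>

text \<open>Non-increasing rearrangement of (|x n|): for x in c_0,
  dec_rearr x n is the (n+1)-st largest value of |x k| (with multiplicity).\<close>
definition dec_rearr :: "(nat \<Rightarrow> real) \<Rightarrow> nat \<Rightarrow> real" where
  "dec_rearr x n = Inf {s. 0 \<le> s \<and> finite {k. s < \<bar>x k\<bar>} \<and> card {k. s < \<bar>x k\<bar>} \<le> n}"

definition lorentz_space :: "(nat \<Rightarrow> real) \<Rightarrow> real \<Rightarrow> (nat \<Rightarrow> real) set" where
  "lorentz_space w p = {x. x \<longlonglongrightarrow> 0 \<and> summable (\<lambda>n. w n * dec_rearr x n powr p)}"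

definition lorentz_norm :: "(nat \<Rightarrow> real) \<Rightarrow> real \<Rightarrow> (nat \<Rightarrow> real) \<Rightarrow> real" where
  "lorentz_norm w p x = (\<Sum>n. w n * dec_rearr x n powr p) powr (1 / p)"

definition lp_space :: "real \<Rightarrow> (nat \<Rightarrow> real) set" where
  "lp_space p = {x. summable (\<lambda>n. \<bar>x n\<bar> powr p)}"

definition lp_norm :: "real \<Rightarrow> (nat \<Rightarrow> real) \<Rightarrow> real" where
  "lp_norm p x = (\<Sum>n. \<bar>x n\<bar> powr p) powr (1 / p)"

text \<open>Bounded linear operators between (subspaces X, Y with norms nX, nY);
  only the values on X matter.\<close>
definition bdd_lin_op ::
  "(nat \<Rightarrow> real) set \<Rightarrow> ((nat \<Rightarrow> real) \<Rightarrow> real) \<Rightarrow> (nat \<Rightarrow> real) set \<Rightarrow> ((nat \<Rightarrow> real) \<Rightarrow> real) \<Rightarrow> ((nat \<Rightarrow> real) \<Rightarrow> (nat \<Rightarrow> real)) \<Rightarrow> bool" where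
  "bdd_lin_op X nX Y nY T \<longleftrightarrow>
     (\<forall>x\<in>X. T x \<in> Y) \<and>
     (\<forall>x\<in>X. \<forall>y\<in>X. T (\<lambda>n. x n + y n) = (\<lambda>n. T x n + T y n)) \<and>
     (\<forall>x\<in>X. \<forall>c. T (\<lambda>n. c * x n) = (\<lambda>n. c * T x n)) \<and>
     (\<exists>C. \<forall>x\<in>X. nY (T x) \<le> C * nX x)"

definition lorentz_op :: "(nat \<Rightarrow> real) \<Rightarrow> real \<Rightarrow> ((nat \<Rightarrow> real) \<Rightarrow> (nat \<Rightarrow> real)) \<Rightarrow> bool" where
  "lorentz_op w p T \<longleftrightarrow>
     bdd_lin_op (lorentz_space w p) (lorentz_norm w p) (lorentz_space w p) (lorentz_norm w p) T"

definition lorentz_opnorm :: "(nat \<Rightarrow> real) \<Rightarrow> real \<Rightarrow> ((nat \<Rightarrow> real) \<Rightarrow> (nat \<Rightarrow> real)) \<Rightarrow> real" where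
  "lorentz_opnorm w p T =
     (SUP x\<in>{x\<in>lorentz_space w p. lorentz_norm w p x \<le> 1}. lorentz_norm w p (T x))"

definition factors_through_lp :: "(nat \<Rightarrow> real) \<Rightarrow> real \<Rightarrow> ((nat \<Rightarrow> real) \<Rightarrow> (nat \<Rightarrow> real)) \<Rightarrow> bool" where
  "factors_through_lp w p T \<longleftrightarrow> lorentz_op w p T \<and>
     (\<exists>A B. bdd_lin_op (lorentz_space w p) (lorentz_norm w p) (lp_space p) (lp_norm p) A \<and>
            bdd_lin_op (lp_space p) (lp_norm p) (lorentz_space w p) (lorentz_norm w p) B \<and>
            (\<forall>x\<in>lorentz_space w p. T x = B (A x)))"

definition in_closure_J_lp :: "(nat \<Rightarrow> real) \<Rightarrow> real \<Rightarrow> ((nat \<Rightarrow> real) \<Rightarrow> (nat \<Rightarrow> real)) \<Rightarrow> bool" where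
  "in_closure_J_lp w p T \<longleftrightarrow> lorentz_op w p T \<and>
     (\<forall>e>0. \<exists>S. factors_through_lp w p S \<and> lorentz_opnorm w p (\<lambda>x n. T x n - S x n) < e)"

definition compact_lorentz_op :: "(nat \<Rightarrow> real) \<Rightarrow> real \<Rightarrow> ((nat \<Rightarrow> real) \<Rightarrow> (nat \<Rightarrow> real)) \<Rightarrow> bool" where
  "compact_lorentz_op w p T \<longleftrightarrow> lorentz_op w p T \<and>
     (\<forall>xs :: nat \<Rightarrow> nat \<Rightarrow> real. (\<forall>n. xs n \<in> lorentz_space w p) \<and> (\<exists>M. \<forall>n. lorentz_norm w p (xs n) \<le> M) \<longrightarrow>
        (\<exists>r y. strict_mono r \<and> y \<in> lorentz_space w p \<and>
           (\<lambda>n. lorentz_norm w p (\<lambda>k. T (xs (r n)) k - y k)) \<longlonglongrightarrow> 0))"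

end

theory Submission
  imports Defs
begin

text \<open>A compact operator \<open>T\<close> is the uniform limit of its truncations to the first \<open>N\<close>
  coordinates. These have finite rank, so they map the Lorentz space boundedly into \<open>\<ell>\<^sub>p\<close>;
  composed with the contractive inclusion of \<open>\<ell>\<^sub>p\<close> into the Lorentz space they factor
  through \<open>\<ell>\<^sub>p\<close>.

  For the strict inclusion, cut \<open>\<nat>\<close> into consecutive blocks along which the partial sums of
  \<open>w\<close> at least double (possible as \<open>\<Sum> w = \<infinity>\<close>) and send \<open>x\<close> to the sequence of its suitably
  normalised \<open>w\<close>-weighted block averages. By the power mean inequality on each block and the
  Hardy--Littlewood inequality this is a contraction into \<open>\<ell>\<^sub>p\<close>, so the operator factors through
  \<open>\<ell>\<^sub>p\<close>. It maps the normalised indicators of the blocks, a bounded sequence, to multiples of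
  distinct unit vectors bounded away from \<open>0\<close>, so it is not compact.\<close>

section \<open>The non-increasing rearrangement\<close>

definition rearr_level :: "(nat \<Rightarrow> real) \<Rightarrow> nat \<Rightarrow> real \<Rightarrow> bool" where
  "rearr_level x n s \<longleftrightarrow> 0 \<le> s \<and> finite {k. s < \<bar>x k\<bar>} \<and> card {k. s < \<bar>x k\<bar>} \<le> n"

lemma dec_rearr_eq_Inf_rearr_level: "dec_rearr x n = Inf (Collect (rearr_level x n))"
  unfolding dec_rearr_def rearr_level_def by simp

lemma rearr_level_if_bound: "0 \<le> B \<Longrightarrow> (\<And>k. \<bar>x k\<bar> \<le> B) \<Longrightarrow> rearr_level x n B"
  unfolding rearr_level_def by (auto simp: not_less[symmetric])

lemma Bseq_imp_rearr_level: "Bseq x \<Longrightarrow> \<exists>s. rearr_level x n s"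
proof (erule BseqE)
  fix K :: real assume "0 < K" "\<forall>k. norm (x k) \<le> K"
  then show ?thesis using rearr_level_if_bound[of K x n] by auto
qed

lemma tendsto_0_imp_Bseq: "x \<longlonglongrightarrow> 0 \<Longrightarrow> Bseq x"
  by (intro convergent_imp_Bseq convergentI)

lemma dec_rearr_le: "rearr_level x n s \<Longrightarrow> dec_rearr x n \<le> s"
  unfolding dec_rearr_eq_Inf_rearr_level
  by (rule cInf_lower) (auto simp: rearr_level_def bdd_below_def)

lemma dec_rearr_greatest: "Bseq x \<Longrightarrow> (\<And>s. rearr_level x n s \<Longrightarrow> v \<le> s) \<Longrightarrow> v \<le> dec_rearr x n"
  using Bseq_imp_rearr_level[of x n] unfolding dec_rearr_eq_Inf_rearr_level
  by (auto intro!: cInf_greatest)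

lemma dec_rearr_nonneg: "Bseq x \<Longrightarrow> 0 \<le> dec_rearr x n"
  by (rule dec_rearr_greatest) (auto simp: rearr_level_def)

lemma dec_rearr_le_bound: "0 \<le> B \<Longrightarrow> (\<And>k. \<bar>x k\<bar> \<le> B) \<Longrightarrow> dec_rearr x n \<le> B"
  by (intro dec_rearr_le rearr_level_if_bound)

lemma dec_rearr_eq_0_if_support_le:
  assumes "Bseq x" "finite S" "card S \<le> n" "\<And>k. k \<notin> S \<Longrightarrow> x k = 0"
  shows "dec_rearr x n = 0"
proof -
  have "{k. 0 < \<bar>x k\<bar>} \<subseteq> S" using assms(4) by force
  then have "rearr_level x n 0"
    unfolding rearr_level_def using assms(2,3) by (meson card_mono finite_subset order_trans order_refl)
  then show ?thesis using dec_rearr_le dec_rearr_nonneg[OF assms(1)] by (meson order_antisym)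
qed

lemma abs_le_dec_rearr_0: "Bseq x \<Longrightarrow> \<bar>x k\<bar> \<le> dec_rearr x 0"
proof (rule dec_rearr_greatest)
  fix s assume "rearr_level x 0 s"
  then have "{k. s < \<bar>x k\<bar>} = {}" unfolding rearr_level_def by auto
  then show "\<bar>x k\<bar> \<le> s" by (auto simp: not_less[symmetric])
qed

lemma dec_rearr_mono:
  assumes "\<And>k. \<bar>u k\<bar> \<le> \<bar>v k\<bar>" "Bseq v"
  shows "dec_rearr u n \<le> dec_rearr v n"
proof (rule dec_rearr_greatest[OF assms(2)])
  fix s assume s: "rearr_level v n s"
  have "{k. s < \<bar>u k\<bar>} \<subseteq> {k. s < \<bar>v k\<bar>}" using assms(1) by (auto intro: less_le_trans)
  then have "rearr_level u n s" using s unfolding rearr_level_def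
    by (meson card_mono finite_subset order_trans)
  then show "dec_rearr u n \<le> s" by (rule dec_rearr_le)
qed

lemma dec_rearr_add_le:
  assumes "\<And>k. \<bar>c k\<bar> \<le> \<bar>a k\<bar> + \<bar>b k\<bar>" "Bseq a" "Bseq b"
  shows "dec_rearr c n \<le> dec_rearr a (n div 2) + dec_rearr b (n div 2)"
proof -
  let ?m = "n div 2"
  have sum_level: "dec_rearr c n \<le> s + t" if s: "rearr_level a ?m s" and t: "rearr_level b ?m t" for s t
  proof (rule dec_rearr_le)
    let ?U = "{k. s < \<bar>a k\<bar>} \<union> {k. t < \<bar>b k\<bar>}"
    have sub: "{k. s + t < \<bar>c k\<bar>} \<subseteq> ?U"
      using assms(1) by (smt (verit) Un_iff mem_Collect_eq subsetI)
    have fin: "finite ?U" using s t unfolding rearr_level_def by auto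
    have "card ?U \<le> ?m + ?m"
      using s t unfolding rearr_level_def by (meson add_mono card_Un_le order_trans)
    then have "card {k. s + t < \<bar>c k\<bar>} \<le> n" using card_mono[OF fin sub] by linarith
    then show "rearr_level c n (s + t)"
      using s t finite_subset[OF sub fin] unfolding rearr_level_def by auto
  qed
  have "dec_rearr c n - t \<le> dec_rearr a ?m" if "rearr_level b ?m t" for t
    using sum_level[OF _ that] by (intro dec_rearr_greatest[OF assms(2)]) force
  then have "dec_rearr c n - dec_rearr a ?m \<le> dec_rearr b ?m"
    by (intro dec_rearr_greatest[OF assms(3)]) force
  then show ?thesis by simp
qed

lemma le_dec_rearr_card:
  assumes "Bseq x" "finite F" "F \<noteq> {}" "\<And>k. k \<in> F \<Longrightarrow> v \<le> \<bar>x k\<bar>"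
  shows "v \<le> dec_rearr x (card F - 1)"
proof (rule dec_rearr_greatest[OF assms(1)])
  fix s assume s: "rearr_level x (card F - 1) s"
  show "v \<le> s"
  proof (rule ccontr)
    assume "\<not> v \<le> s"
    then have "F \<subseteq> {k. s < \<bar>x k\<bar>}" using assms(4) by force
    then have "card F \<le> card {k. s < \<bar>x k\<bar>}" using s unfolding rearr_level_def by (simp add: card_mono)
    moreover have "card F > 0" using assms(2,3) by (simp add: card_gt_0_iff)
    ultimately show False using s unfolding rearr_level_def by linarith
  qed
qed

lemma sum_abs_powr_le_sum_dec_rearr:
  assumes "Bseq x" "0 \<le> p" "finite F"
  shows "(\<Sum>k\<in>F. \<bar>x k\<bar> powr p) \<le> (\<Sum>n<card F. dec_rearr x n powr p)"
  using assms(3)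
proof (induct "card F" arbitrary: F)
  case 0
  then show ?case by simp
next
  case (Suc N F)
  then have "F \<noteq> {}" by auto
  then have "Min ((\<lambda>k. \<bar>x k\<bar>) ` F) \<in> (\<lambda>k. \<bar>x k\<bar>) ` F"
    using Suc.prems by (intro Min_in) auto
  then obtain k0 where k0: "k0 \<in> F" "\<bar>x k0\<bar> = Min ((\<lambda>k. \<bar>x k\<bar>) ` F)" by auto
  have N: "N = card (F - {k0})" using Suc k0 by simp
  have "\<bar>x k0\<bar> \<le> dec_rearr x (card F - 1)"
    using k0 Suc.prems \<open>F \<noteq> {}\<close> by (intro le_dec_rearr_card[OF assms(1)]) auto
  then have "\<bar>x k0\<bar> \<le> dec_rearr x N" using Suc.hyps(2) by (metis diff_Suc_1)
  then have last: "\<bar>x k0\<bar> powr p \<le> dec_rearr x N powr p" using assms(2) by (simp add: powr_mono2)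
  have init: "(\<Sum>k\<in>F - {k0}. \<bar>x k\<bar> powr p) \<le> (\<Sum>n<N. dec_rearr x n powr p)"
    using Suc.hyps(1)[OF N] Suc.prems N by simp
  have "(\<Sum>k\<in>F. \<bar>x k\<bar> powr p) = (\<Sum>k\<in>F - {k0}. \<bar>x k\<bar> powr p) + \<bar>x k0\<bar> powr p"
    using Suc.prems k0(1) by (simp add: sum.remove add.commute)
  also have "\<dots> \<le> (\<Sum>n<N. dec_rearr x n powr p) + dec_rearr x N powr p"
    using init last by linarith
  also have "\<dots> = (\<Sum>n<card F. dec_rearr x n powr p)" using Suc.hyps(2)[symmetric] by simp
  finally show ?case .
qed

lemma finite_abs_gt_if_tendsto_0:
  fixes x :: "nat \<Rightarrow> real"
  assumes "x \<longlonglongrightarrow> 0" "0 < e"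
  shows "finite {k. e < \<bar>x k\<bar>}"
proof -
  obtain N where "\<forall>k\<ge>N. norm (x k - 0) < e" using LIMSEQ_D[OF assms] by blast
  then have "{k. e < \<bar>x k\<bar>} \<subseteq> {..<N}" by (force simp: not_less[symmetric])
  then show ?thesis using finite_subset by blast
qed

text \<open>If fewer than \<open>n + 1\<close> coordinates reached \<open>c = dec_rearr x n > 0\<close>, the largest value of
  \<open>|x|\<close> in \<open>[c/2, c)\<close> (or \<open>c/2\<close> itself) would be a level below \<open>c\<close> exceeded by at most \<open>n\<close>
  coordinates.\<close>
lemma dec_rearr_attained:
  assumes x0: "x \<longlonglongrightarrow> 0" and c_pos: "0 < dec_rearr x n"
  shows "finite {k. dec_rearr x n \<le> \<bar>x k\<bar>} \<and> n < card {k. dec_rearr x n \<le> \<bar>x k\<bar>}"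
proof -
  define c where "c = dec_rearr x n"
  define E where "E = {k. c/2 < \<bar>x k\<bar>}"
  define G where "G = {k. c \<le> \<bar>x k\<bar>}"
  have c: "0 < c" using c_pos c_def by simp
  have finE: "finite E" unfolding E_def using finite_abs_gt_if_tendsto_0[OF x0, of "c/2"] c by simp
  have "G \<subseteq> E" unfolding G_def E_def using c by auto
  then have finG: "finite G" using finE by (rule finite_subset)
  have "n < card G"
  proof (rule ccontr)
    assume small: "\<not> n < card G"
    define V where "V = insert (c/2) ((\<lambda>k. \<bar>x k\<bar>) ` {k\<in>E. \<bar>x k\<bar> < c})"
    have finV: "finite V" unfolding V_def using finE by simp
    define s where "s = Max V"
    have "s \<in> V" unfolding s_def using finV by (intro Max_in) (auto simp: V_def)
    then have s_lt: "s < c" using c unfolding V_def by auto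
    have s_ge: "c/2 \<le> s" unfolding s_def using finV by (intro Max_ge) (auto simp: V_def)
    have "{k. s < \<bar>x k\<bar>} \<subseteq> G"
    proof
      fix k assume k: "k \<in> {k. s < \<bar>x k\<bar>}"
      show "k \<in> G"
      proof (rule ccontr)
        assume "k \<notin> G"
        then have "\<bar>x k\<bar> \<in> V" using k s_ge unfolding V_def G_def E_def by auto
        then have "\<bar>x k\<bar> \<le> s" unfolding s_def using finV by (intro Max_ge)
        then show False using k by simp
      qed
    qed
    moreover have "G \<subseteq> {k. s < \<bar>x k\<bar>}" unfolding G_def using s_lt by auto
    ultimately have "{k. s < \<bar>x k\<bar>} = G" by (rule antisym)
    then have "rearr_level x n s" unfolding rearr_level_def using finG small s_ge c by auto
    then have "c \<le> s" unfolding c_def by (rule dec_rearr_le)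
    then show False using s_lt by simp
  qed
  then show ?thesis using finG unfolding G_def c_def by simp
qed

lemma ex_sum_dec_rearr_le_sum_abs_powr:
  assumes x0: "x \<longlonglongrightarrow> 0" and p: "0 < p"
  shows "\<exists>F. finite F \<and> card F = N \<and> (\<Sum>n<N. dec_rearr x n powr p) \<le> (\<Sum>k\<in>F. \<bar>x k\<bar> powr p)"
proof (induct N)
  case 0
  show ?case by (intro exI[of _ "{}"]) simp
next
  case (Suc N)
  then obtain F where F: "finite F" "card F = N"
    "(\<Sum>n<N. dec_rearr x n powr p) \<le> (\<Sum>k\<in>F. \<bar>x k\<bar> powr p)"
    by blast
  have bx: "Bseq x" using x0 by (rule tendsto_0_imp_Bseq)
  have "\<exists>k. k \<notin> F \<and> dec_rearr x N \<le> \<bar>x k\<bar>"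
  proof (cases "dec_rearr x N = 0")
    case True
    then show ?thesis using ex_new_if_finite[OF infinite_UNIV_nat F(1)] by auto
  next
    case False
    then have "0 < dec_rearr x N" using dec_rearr_nonneg[OF bx, of N] by simp
    from dec_rearr_attained[OF x0 this] have "\<not> {k. dec_rearr x N \<le> \<bar>x k\<bar>} \<subseteq> F"
      using card_mono[OF F(1)] F(2) by (metis not_le)
    then show ?thesis by blast
  qed
  then obtain k where k: "k \<notin> F" "dec_rearr x N \<le> \<bar>x k\<bar>" by blast
  have "dec_rearr x N powr p \<le> \<bar>x k\<bar> powr p"
    using k(2) dec_rearr_nonneg[OF bx] p by (simp add: powr_mono2)
  then have "(\<Sum>n<Suc N. dec_rearr x n powr p) \<le> (\<Sum>k\<in>insert k F. \<bar>x k\<bar> powr p)"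
    using F k by simp
  then show ?case using F k by (intro exI[of _ "insert k F"]) simp
qed

lemma sum_lessThan_split:
  fixes f :: "nat \<Rightarrow> 'a::comm_monoid_add"
  shows "a \<le> b \<Longrightarrow> (\<Sum>n<b. f n) = (\<Sum>n<a. f n) + (\<Sum>n\<in>{a..<b}. f n)"
  by (simp add: atLeast0LessThan[symmetric] sum.atLeastLessThan_concat)

lemma sum_lessThan_div2_le:
  fixes g :: "nat \<Rightarrow> real"
  assumes "\<And>n. 0 \<le> g n"
  shows "(\<Sum>n<N. g (n div 2)) \<le> 2 * (\<Sum>m<N. g m)"
proof -
  have double: "(\<Sum>n<2*M. g (n div 2)) = 2 * (\<Sum>m<M. g m)" for M
    by (induct M) simp_all
  have "(\<Sum>n<N. g (n div 2)) \<le> (\<Sum>n<2*N. g (n div 2))"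
    by (rule sum_mono2) (auto intro: assms)
  then show ?thesis using double[of N] by simp
qed

lemma powr_add_le:
  fixes s t p :: real
  assumes "0 \<le> s" "0 \<le> t" "0 \<le> p"
  shows "(s + t) powr p \<le> 2 powr p * (s powr p + t powr p)"
proof -
  have "(s + t) powr p \<le> (2 * max s t) powr p" using assms by (intro powr_mono2) auto
  also have "\<dots> = 2 powr p * max s t powr p" using assms by (simp add: powr_mult)
  also have "\<dots> \<le> 2 powr p * (s powr p + t powr p)"
    by (intro mult_left_mono) (auto simp: max_def)
  finally show ?thesis .
qed

text \<open>Abel summation: with \<open>D M = (\<Sum>n<M. b n - a n)\<close> the difference of the weighted sums is
  \<open>w N * D N + (\<Sum>n<N. (w n - w (Suc n)) * D (Suc n))\<close>, a sum of non-negative terms.\<close>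
lemma sum_weighted_le_if_partial_sums_le:
  fixes w a b :: "nat \<Rightarrow> real"
  assumes "\<And>n. 0 \<le> w n" "\<And>n. w (Suc n) \<le> w n"
    and "\<And>M. M \<le> N \<Longrightarrow> (\<Sum>n<M. a n) \<le> (\<Sum>n<M. b n)"
  shows "(\<Sum>n<N. w n * a n) \<le> (\<Sum>n<N. w n * b n)"
proof -
  define D where "D M = (\<Sum>n<M. b n - a n)" for M
  have abel: "(\<Sum>n<K. w n * (b n - a n)) = w K * D K + (\<Sum>n<K. (w n - w (Suc n)) * D (Suc n))" for K
    by (induct K) (simp_all add: D_def algebra_simps)
  have "M \<le> N \<Longrightarrow> 0 \<le> D M" for M using assms(3)[of M] by (simp add: D_def sum_subtractf)
  then have "0 \<le> w N * D N + (\<Sum>n<N. (w n - w (Suc n)) * D (Suc n))"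
    using assms(1,2) by (intro add_nonneg_nonneg sum_nonneg mult_nonneg_nonneg) auto
  then show ?thesis unfolding abel[symmetric] by (simp add: algebra_simps sum_subtractf)
qed

lemma convex_on_powr_atLeast_0:
  fixes p :: real
  assumes "1 \<le> p"
  shows "convex_on {0..} (\<lambda>x. x powr p)"
proof (rule convex_onI)
  fix t x y :: real assume t: "0 < t" "t < 1" and x: "x \<in> {0..}" and y: "y \<in> {0..}"
  have powr_le: "u powr p \<le> u" if "0 \<le> u" "u \<le> 1" for u :: real
    using powr_mono'[of 1 p u] that assms by simp
  show "((1 - t) *\<^sub>R x + t *\<^sub>R y) powr p \<le> (1 - t) * x powr p + t * y powr p"
  proof (cases "x = 0 \<or> y = 0")
    case True
    have "(t * y) powr p \<le> t * y powr p" "((1 - t) * x) powr p \<le> (1 - t) * x powr p"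
      using powr_le[of t] powr_le[of "1 - t"] t x y
      by (auto simp: powr_mult intro!: mult_right_mono)
    then show ?thesis using True by auto
  next
    case False
    then show ?thesis using x y t convex_onD[OF powr_convex[OF assms], of t x y] by auto
  qed
qed (simp add: convex_real_interval)

lemma weighted_power_mean_le:
  fixes w x :: "nat \<Rightarrow> real" and p :: real
  assumes p: "1 \<le> p" and R: "finite R" and w: "\<And>n. 0 \<le> w n" and S_pos: "0 < (\<Sum>n\<in>R. w n)"
  shows "(\<Sum>n\<in>R. w n * \<bar>x n\<bar>) powr p \<le> (\<Sum>n\<in>R. w n) powr (p - 1) * (\<Sum>n\<in>R. w n * \<bar>x n\<bar> powr p)"
proof -
  define S where "S = (\<Sum>n\<in>R. w n)"
  have S: "0 < S" using S_pos S_def by simp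
  have "R \<noteq> {}" using S_pos by auto
  moreover have "(\<Sum>n\<in>R. w n / S) = 1" using S unfolding S_def by (simp add: sum_divide_distrib[symmetric])
  ultimately have jensen: "(\<Sum>n\<in>R. (w n / S) *\<^sub>R \<bar>x n\<bar>) powr p \<le> (\<Sum>n\<in>R. (w n / S) * \<bar>x n\<bar> powr p)"
    using convex_on_sum[OF R _ convex_on_powr_atLeast_0[OF p], of "\<lambda>n. w n / S" "\<lambda>n. \<bar>x n\<bar>"] w S
    by auto
  have "(\<Sum>n\<in>R. w n * \<bar>x n\<bar>) powr p = S powr p * ((\<Sum>n\<in>R. w n * \<bar>x n\<bar>) / S) powr p"
    using S w by (simp add: powr_divide sum_nonneg)
  also have "\<dots> \<le> S powr p * ((\<Sum>n\<in>R. w n * \<bar>x n\<bar> powr p) / S)"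
    using jensen by (intro mult_left_mono) (auto simp: sum_divide_distrib)
  also have "\<dots> = S powr (p - 1) * (\<Sum>n\<in>R. w n * \<bar>x n\<bar> powr p)"
    using S by (simp add: powr_diff)
  finally show ?thesis unfolding S_def .
qed

definition lorentz_sum :: "(nat \<Rightarrow> real) \<Rightarrow> real \<Rightarrow> (nat \<Rightarrow> real) \<Rightarrow> real" where
  "lorentz_sum w p x = (\<Sum>n. w n * dec_rearr x n powr p)"

lemma lorentz_norm_eq_lorentz_sum_powr: "lorentz_norm w p x = lorentz_sum w p x powr (1/p)"
  unfolding lorentz_norm_def lorentz_sum_def by simp

lemma lorentz_norm_nonneg: "0 \<le> lorentz_norm w p x"
  unfolding lorentz_norm_def by simp

locale lorentz_weight =
  fixes w :: "nat \<Rightarrow> real" and p :: real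
  assumes one_le_p: "1 \<le> p" and weight_0: "w 0 = 1" and weight_decseq: "decseq w"
    and weight_tendsto_0: "w \<longlonglongrightarrow> 0"
begin

lemma p_pos: "0 < p"
  using one_le_p by simp

lemma weight_nonneg: "0 \<le> w n"
  using decseq_ge[OF weight_decseq weight_tendsto_0] by simp

lemma weight_antimono: "m \<le> n \<Longrightarrow> w n \<le> w m"
  using weight_decseq unfolding decseq_def by blast

lemma weight_le_1: "w n \<le> 1"
  using weight_antimono[of 0 n] weight_0 by simp

lemma lorentz_summand_nonneg: "0 \<le> w n * dec_rearr x n powr p"
  using weight_nonneg by simp

lemma mem_lorentz_space:
  "x \<in> lorentz_space w p \<longleftrightarrow> x \<longlonglongrightarrow> 0 \<and> summable (\<lambda>n. w n * dec_rearr x n powr p)"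
  unfolding lorentz_space_def by simp

lemma lorentz_space_imp_Bseq: "x \<in> lorentz_space w p \<Longrightarrow> Bseq x"
  unfolding mem_lorentz_space by (blast intro: tendsto_0_imp_Bseq)

lemma lorentz_sum_nonneg: "x \<in> lorentz_space w p \<Longrightarrow> 0 \<le> lorentz_sum w p x"
  unfolding lorentz_sum_def mem_lorentz_space by (auto intro: suminf_nonneg lorentz_summand_nonneg)

lemma lorentz_sum_eq_norm_powr: "x \<in> lorentz_space w p \<Longrightarrow> lorentz_sum w p x = lorentz_norm w p x powr p"
  unfolding lorentz_norm_eq_lorentz_sum_powr using lorentz_sum_nonneg p_pos by (simp add: powr_powr)

lemma lorentz_sum_le_if_partial_sums_le:
  assumes "\<And>N. (\<Sum>n<N. w n * dec_rearr x n powr p) \<le> B" "x \<longlonglongrightarrow> 0"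
  shows "x \<in> lorentz_space w p \<and> lorentz_sum w p x \<le> B"
proof -
  have "summable (\<lambda>n. w n * dec_rearr x n powr p)"
    using assms(1) by (rule summableI_nonneg_bounded[OF lorentz_summand_nonneg])
  then show ?thesis
    using assms suminf_le_const unfolding mem_lorentz_space lorentz_sum_def by blast
qed

lemma lorentz_dominated:
  assumes v: "v \<in> lorentz_space w p" and "u \<longlonglongrightarrow> 0" and le: "\<And>k. \<bar>u k\<bar> \<le> \<bar>v k\<bar>"
  shows "u \<in> lorentz_space w p \<and> lorentz_sum w p u \<le> lorentz_sum w p v"
proof (rule lorentz_sum_le_if_partial_sums_le[OF _ \<open>u \<longlonglongrightarrow> 0\<close>])
  have Bv: "Bseq v" using v by (rule lorentz_space_imp_Bseq)
  have "w n * dec_rearr u n powr p \<le> w n * dec_rearr v n powr p" for n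
    using dec_rearr_mono[OF le Bv, of n] dec_rearr_nonneg[OF tendsto_0_imp_Bseq[OF \<open>u \<longlonglongrightarrow> 0\<close>]]
      weight_nonneg p_pos
    by (intro mult_left_mono powr_mono2) auto
  then have "(\<Sum>n<N. w n * dec_rearr u n powr p) \<le> (\<Sum>n<N. w n * dec_rearr v n powr p)" for N
    by (rule sum_mono)
  also have "(\<Sum>n<N. w n * dec_rearr v n powr p) \<le> lorentz_sum w p v" for N
    using v unfolding mem_lorentz_space lorentz_sum_def
    by (intro sum_le_suminf lorentz_summand_nonneg) auto
  finally show "(\<Sum>n<N. w n * dec_rearr u n powr p) \<le> lorentz_sum w p v" for N .
qed

lemma lorentz_quasi_triangle:
  assumes a: "a \<in> lorentz_space w p" and b: "b \<in> lorentz_space w p" and "c \<longlonglongrightarrow> 0"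
    and le: "\<And>k. \<bar>c k\<bar> \<le> \<bar>a k\<bar> + \<bar>b k\<bar>"
  shows "c \<in> lorentz_space w p \<and> lorentz_sum w p c \<le> 2 * 2 powr p * (lorentz_sum w p a + lorentz_sum w p b)"
proof (rule lorentz_sum_le_if_partial_sums_le[OF _ \<open>c \<longlonglongrightarrow> 0\<close>])
  have Ba: "Bseq a" and Bb: "Bseq b" using a b by (auto intro: lorentz_space_imp_Bseq)
  have Bc: "Bseq c" using \<open>c \<longlonglongrightarrow> 0\<close> by (rule tendsto_0_imp_Bseq)
  define g where "g m = w m * (dec_rearr a m powr p + dec_rearr b m powr p)" for m
  have g_nonneg: "0 \<le> g m" for m unfolding g_def using weight_nonneg by simp
  have "g sums (lorentz_sum w p a + lorentz_sum w p b)"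
    unfolding g_def distrib_left lorentz_sum_def
    using a b unfolding mem_lorentz_space by (intro sums_add summable_sums) auto
  then have g: "summable g" "suminf g = lorentz_sum w p a + lorentz_sum w p b"
    by (auto simp: sums_iff)
  have term_le: "w n * dec_rearr c n powr p \<le> 2 powr p * g (n div 2)" for n
  proof -
    let ?m = "n div 2"
    have "w n * dec_rearr c n powr p \<le> w ?m * (dec_rearr a ?m + dec_rearr b ?m) powr p"
      using dec_rearr_add_le[OF le Ba Bb, of n] dec_rearr_nonneg[OF Bc, of n] weight_nonneg
        weight_antimono[of ?m n] p_pos
      by (intro mult_mono powr_mono2) auto
    also have "\<dots> \<le> w ?m * (2 powr p * (dec_rearr a ?m powr p + dec_rearr b ?m powr p))"
      using weight_nonneg dec_rearr_nonneg[OF Ba] dec_rearr_nonneg[OF Bb] p_pos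
      by (intro mult_left_mono powr_add_le) auto
    finally show ?thesis unfolding g_def by (simp add: algebra_simps)
  qed
  show "(\<Sum>n<N. w n * dec_rearr c n powr p) \<le> 2 * 2 powr p * (lorentz_sum w p a + lorentz_sum w p b)" for N
  proof -
    have "(\<Sum>n<N. w n * dec_rearr c n powr p) \<le> 2 powr p * (\<Sum>n<N. g (n div 2))"
      using term_le by (simp add: sum_distrib_left sum_mono)
    also have "\<dots> \<le> 2 powr p * (2 * (\<Sum>m<N. g m))"
      by (intro mult_left_mono sum_lessThan_div2_le g_nonneg) simp
    also have "\<dots> \<le> 2 powr p * (2 * suminf g)"
      using sum_le_suminf[OF g(1), of "{..<N}"] g_nonneg by (intro mult_left_mono) auto
    finally show ?thesis using g(2) by (simp add: algebra_simps)
  qed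
qed

lemma lorentz_diff:
  assumes "a \<in> lorentz_space w p" "b \<in> lorentz_space w p"
  shows "(\<lambda>k. a k - b k) \<in> lorentz_space w p"
proof -
  have "(\<lambda>k. a k - b k) \<longlonglongrightarrow> 0 - 0" using assms unfolding mem_lorentz_space by (intro tendsto_diff) auto
  then show ?thesis using lorentz_quasi_triangle[OF assms, of "\<lambda>k. a k - b k"] abs_triangle_ineq4 by simp
qed

lemma lorentz_zero: "(\<lambda>k. 0) \<in> lorentz_space w p \<and> lorentz_sum w p (\<lambda>k. 0) = 0"
proof -
  have "dec_rearr (\<lambda>k. 0) n = 0" for n
    using dec_rearr_le_bound[of 0 "\<lambda>k. 0" n] dec_rearr_nonneg[of "\<lambda>k. 0" n] by simp
  then show ?thesis unfolding mem_lorentz_space lorentz_sum_def by simp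
qed

lemma abs_powr_le_lorentz_sum:
  assumes "x \<in> lorentz_space w p"
  shows "\<bar>x k\<bar> powr p \<le> lorentz_sum w p x"
proof -
  have "\<bar>x k\<bar> powr p \<le> dec_rearr x 0 powr p"
    using abs_le_dec_rearr_0[OF lorentz_space_imp_Bseq[OF assms]] p_pos by (simp add: powr_mono2)
  also have "\<dots> = (\<Sum>n\<in>{0}. w n * dec_rearr x n powr p)" using weight_0 by simp
  also have "\<dots> \<le> lorentz_sum w p x"
    using assms unfolding mem_lorentz_space lorentz_sum_def
    by (intro sum_le_suminf lorentz_summand_nonneg) auto
  finally show ?thesis .
qed

text \<open>The Hardy--Littlewood inequality for partial sums: the weights decrease, and the
  partial sums of \<open>dec_rearr x\<close> dominate those of \<open>|x|\<close>.\<close>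
lemma sum_weighted_abs_powr_le_dec_rearr:
  assumes "x \<longlonglongrightarrow> 0"
  shows "(\<Sum>n<N. w n * \<bar>x n\<bar> powr p) \<le> (\<Sum>n<N. w n * dec_rearr x n powr p)"
proof (rule sum_weighted_le_if_partial_sums_le)
  show "(\<Sum>n<M. \<bar>x n\<bar> powr p) \<le> (\<Sum>n<M. dec_rearr x n powr p)" for M
    using sum_abs_powr_le_sum_dec_rearr[OF tendsto_0_imp_Bseq[OF assms], of p "{..<M}"] p_pos by simp
qed (auto intro: weight_nonneg weight_antimono)

lemma lorentz_sum_le_lp_sum:
  assumes y: "summable (\<lambda>k. \<bar>y k\<bar> powr p)"
  shows "y \<in> lorentz_space w p \<and> lorentz_sum w p y \<le> (\<Sum>k. \<bar>y k\<bar> powr p)"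
proof -
  have "(\<lambda>k. (\<bar>y k\<bar> powr p) powr (1/p)) \<longlonglongrightarrow> 0"
    by (rule tendsto_zero_powrI[OF summable_LIMSEQ_zero[OF y] tendsto_const]) (use p_pos in auto)
  then have "(\<lambda>k. \<bar>y k\<bar>) \<longlonglongrightarrow> 0"
    using p_pos by (simp add: powr_powr)
  then have y0: "y \<longlonglongrightarrow> 0" by (simp add: tendsto_rabs_zero_iff)
  show ?thesis
  proof (rule lorentz_sum_le_if_partial_sums_le[OF _ y0])
    fix N
    obtain F where F: "finite F" "card F = N"
      "(\<Sum>n<N. dec_rearr y n powr p) \<le> (\<Sum>k\<in>F. \<bar>y k\<bar> powr p)"
      using ex_sum_dec_rearr_le_sum_abs_powr[OF y0 p_pos] by blast
    have "(\<Sum>n<N. w n * dec_rearr y n powr p) \<le> (\<Sum>n<N. dec_rearr y n powr p)"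
      using weight_le_1 weight_nonneg by (intro sum_mono mult_left_le_one_le) auto
    also have "\<dots> \<le> (\<Sum>k. \<bar>y k\<bar> powr p)"
      using order_trans[OF F(3) sum_le_suminf[OF y F(1)]] by simp
    finally show "(\<Sum>n<N. w n * dec_rearr y n powr p) \<le> (\<Sum>k. \<bar>y k\<bar> powr p)" .
  qed
qed

lemma lp_subset_lorentz_space:
  assumes "y \<in> lp_space p"
  shows "y \<in> lorentz_space w p \<and> lorentz_norm w p y \<le> lp_norm p y"
  using lorentz_sum_le_lp_sum[of y] assms lorentz_sum_nonneg p_pos
  unfolding lp_space_def lp_norm_def lorentz_norm_eq_lorentz_sum_powr by (simp add: powr_mono2)

lemma lp_embedding_bdd_lin_op:
  "bdd_lin_op (lp_space p) (lp_norm p) (lorentz_space w p) (lorentz_norm w p) (\<lambda>y. y)"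
  unfolding bdd_lin_op_def using lp_subset_lorentz_space by (metis mult_1)

lemma lorentz_norm_tendsto_0_iff:
  assumes "\<And>n. xs n \<in> lorentz_space w p"
  shows "(\<lambda>n. lorentz_norm w p (xs n)) \<longlonglongrightarrow> 0 \<longleftrightarrow> (\<lambda>n. lorentz_sum w p (xs n)) \<longlonglongrightarrow> 0"
proof
  assume "(\<lambda>n. lorentz_norm w p (xs n)) \<longlonglongrightarrow> 0"
  then have "(\<lambda>n. lorentz_norm w p (xs n) powr p) \<longlonglongrightarrow> 0"
    using p_pos by (intro tendsto_zero_powrI[OF _ tendsto_const]) (auto simp: lorentz_norm_nonneg)
  then show "(\<lambda>n. lorentz_sum w p (xs n)) \<longlonglongrightarrow> 0" using lorentz_sum_eq_norm_powr assms by simp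
next
  assume "(\<lambda>n. lorentz_sum w p (xs n)) \<longlonglongrightarrow> 0"
  then show "(\<lambda>n. lorentz_norm w p (xs n)) \<longlonglongrightarrow> 0"
    unfolding lorentz_norm_eq_lorentz_sum_powr using p_pos assms
    by (intro tendsto_zero_powrI[OF _ tendsto_const]) (auto intro!: always_eventually lorentz_sum_nonneg)
qed

lemma lorentz_unit_ball_nonempty: "{x \<in> lorentz_space w p. lorentz_norm w p x \<le> 1} \<noteq> {}"
  using lorentz_zero by (auto simp: lorentz_norm_eq_lorentz_sum_powr)

lemma lorentz_opnorm_zero: "lorentz_opnorm w p (\<lambda>x n. 0) = 0"
proof -
  have "lorentz_norm w p (\<lambda>n. 0) = 0" using lorentz_zero by (simp add: lorentz_norm_eq_lorentz_sum_powr)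
  then show ?thesis unfolding lorentz_opnorm_def using cSUP_const[OF lorentz_unit_ball_nonempty] by simp
qed

lemma bdd_lin_op_into_lp_factors_through_lp:
  assumes A: "bdd_lin_op (lorentz_space w p) (lorentz_norm w p) (lp_space p) (lp_norm p) A"
  shows "factors_through_lp w p A"
proof -
  have A_in: "\<And>x. x \<in> lorentz_space w p \<Longrightarrow> A x \<in> lp_space p"
    and A_add: "\<And>x y. x \<in> lorentz_space w p \<Longrightarrow> y \<in> lorentz_space w p \<Longrightarrow> A (\<lambda>n. x n + y n) = (\<lambda>n. A x n + A y n)"
    and A_scale: "\<And>x c. x \<in> lorentz_space w p \<Longrightarrow> A (\<lambda>n. c * x n) = (\<lambda>n. c * A x n)"
    using A unfolding bdd_lin_op_def by blast+
  obtain C where A_bdd: "\<And>x. x \<in> lorentz_space w p \<Longrightarrow> lp_norm p (A x) \<le> C * lorentz_norm w p x"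
    using A unfolding bdd_lin_op_def by blast
  have "A x \<in> lorentz_space w p \<and> lorentz_norm w p (A x) \<le> C * lorentz_norm w p x"
    if "x \<in> lorentz_space w p" for x
    using lp_subset_lorentz_space[OF A_in[OF that]] A_bdd[OF that] by simp
  then have "lorentz_op w p A" unfolding lorentz_op_def bdd_lin_op_def using A_add A_scale by blast
  then show ?thesis
    unfolding factors_through_lp_def using A lp_embedding_bdd_lin_op by blast
qed

lemma factors_through_lp_imp_in_closure_J_lp: "factors_through_lp w p T \<Longrightarrow> in_closure_J_lp w p T"
  unfolding in_closure_J_lp_def using lorentz_opnorm_zero
  by (intro conjI allI impI exI[of _ T]) (auto simp: factors_through_lp_def)

end

section \<open>Compact operators are approximable through \<open>\<ell>\<^sub>p\<close>\<close>

definition head_seq :: "nat \<Rightarrow> (nat \<Rightarrow> real) \<Rightarrow> nat \<Rightarrow> real" where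
  "head_seq N v = (\<lambda>k. if k < N then v k else 0)"

definition tail_seq :: "nat \<Rightarrow> (nat \<Rightarrow> real) \<Rightarrow> nat \<Rightarrow> real" where
  "tail_seq N v = (\<lambda>k. if k < N then 0 else v k)"

lemma head_seq_tendsto_0: "head_seq N v \<longlonglongrightarrow> 0"
  by (rule tendsto_eventually) (auto simp: eventually_sequentially head_seq_def intro: exI[of _ N])

lemma tail_seq_tendsto_0: "v \<longlonglongrightarrow> 0 \<Longrightarrow> tail_seq N v \<longlonglongrightarrow> 0"
  by (erule Lim_transform_eventually) (auto simp: eventually_sequentially tail_seq_def intro: exI[of _ N])

lemma abs_tail_seq_le: "\<bar>tail_seq N v k\<bar> \<le> \<bar>v k\<bar>"
  by (simp add: tail_seq_def)

context lorentz_weight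
begin

lemma lorentz_sum_tail_seq_tendsto_0:
  assumes y: "y \<in> lorentz_space w p"
  shows "(\<lambda>N. lorentz_sum w p (tail_seq N y)) \<longlonglongrightarrow> 0"
proof -
  have y0: "y \<longlonglongrightarrow> 0" and Bseq_y: "Bseq y" using y lorentz_space_imp_Bseq mem_lorentz_space by auto
  have Bseq_tail: "Bseq (tail_seq N y)" for N by (intro tendsto_0_imp_Bseq tail_seq_tendsto_0 y0)
  have rearr_tendsto_0: "(\<lambda>N. dec_rearr (tail_seq N y) n) \<longlonglongrightarrow> 0" for n
  proof (rule LIMSEQ_I)
    fix r :: real assume "0 < r"
    then obtain N0 where N0: "\<forall>k\<ge>N0. norm (y k - 0) < r / 2" using LIMSEQ_D[OF y0, of "r/2"] by auto
    have "dec_rearr (tail_seq N y) n \<le> r / 2" if "N0 \<le> N" for N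
      using N0 that \<open>0 < r\<close> by (intro dec_rearr_le_bound) (auto simp: tail_seq_def less_imp_le)
    then show "\<exists>N0. \<forall>N\<ge>N0. norm (dec_rearr (tail_seq N y) n - 0) < r"
      using dec_rearr_nonneg[OF Bseq_tail] \<open>0 < r\<close> by (intro exI[of _ N0]) force
  qed
  have "(\<lambda>N. \<Sum>n. w n * dec_rearr (tail_seq N y) n powr p) \<longlonglongrightarrow> (\<Sum>n. 0)"
  proof (rule tannerys_theorem[THEN conjunct2, THEN conjunct2])
    show "(\<lambda>N. w n * dec_rearr (tail_seq N y) n powr p) \<longlonglongrightarrow> 0" for n
      using rearr_tendsto_0[of n] p_pos dec_rearr_nonneg[OF Bseq_tail]
      by (intro tendsto_mult_right_zero tendsto_zero_powrI[OF _ tendsto_const]) auto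
    have "norm (w n * dec_rearr (tail_seq N y) n powr p) \<le> w n * dec_rearr y n powr p" for n N
      using dec_rearr_mono[of "tail_seq N y" y, OF abs_tail_seq_le Bseq_y] dec_rearr_nonneg[OF Bseq_tail] weight_nonneg p_pos
      by (auto intro!: mult_left_mono powr_mono2)
    then show "\<forall>\<^sub>F (n, N) in sequentially \<times>\<^sub>F sequentially.
        norm (w n * dec_rearr (tail_seq N y) n powr p) \<le> w n * dec_rearr y n powr p"
      by (intro always_eventually) auto
    show "summable (\<lambda>n. w n * dec_rearr y n powr p)" using y mem_lorentz_space by blast
  qed simp
  then show ?thesis unfolding lorentz_sum_def by simp
qed

text \<open>Otherwise there are \<open>x\<^sub>N\<close> in the unit ball whose \<open>N\<close>-th tails of \<open>T x\<^sub>N\<close> are large; along a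
  subsequence \<open>T x\<^sub>N\<close> converges to some \<open>y\<close>, and the tails of \<open>T x\<^sub>N\<close> are dominated by those of
  \<open>T x\<^sub>N - y\<close> and of \<open>y\<close>, which both vanish.\<close>
lemma compact_op_tails_uniformly_small:
  assumes T: "compact_lorentz_op w p T" and e: "0 < e"
  shows "\<exists>N. \<forall>x\<in>lorentz_space w p. lorentz_norm w p x \<le> 1 \<longrightarrow> lorentz_norm w p (tail_seq N (T x)) \<le> e"
proof (rule ccontr)
  assume "\<not> ?thesis"
  then have "\<forall>N. \<exists>x. x \<in> lorentz_space w p \<and> lorentz_norm w p x \<le> 1 \<and> e < lorentz_norm w p (tail_seq N (T x))"
    by (auto simp: not_le)
  then have "\<exists>xs. \<forall>N. xs N \<in> lorentz_space w p \<and> lorentz_norm w p (xs N) \<le> 1 \<and>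
      e < lorentz_norm w p (tail_seq N (T (xs N)))"
    by (rule choice)
  then obtain xs where xs: "\<And>N. xs N \<in> lorentz_space w p" "\<And>N. lorentz_norm w p (xs N) \<le> 1"
    "\<And>N. e < lorentz_norm w p (tail_seq N (T (xs N)))"
    by blast
  have T_in: "\<And>x. x \<in> lorentz_space w p \<Longrightarrow> T x \<in> lorentz_space w p"
    using T unfolding compact_lorentz_op_def lorentz_op_def bdd_lin_op_def by blast
  obtain r y where r: "strict_mono r" and y: "y \<in> lorentz_space w p"
    and lim: "(\<lambda>n. lorentz_norm w p (\<lambda>k. T (xs (r n)) k - y k)) \<longlonglongrightarrow> 0"
    using T xs unfolding compact_lorentz_op_def by blast
  define d where "d n = (\<lambda>k. T (xs (r n)) k - y k)" for n
  have d_in: "d n \<in> lorentz_space w p" for n unfolding d_def by (rule lorentz_diff[OF T_in[OF xs(1)] y])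
  have "(\<lambda>n. lorentz_sum w p (d n)) \<longlonglongrightarrow> 0"
    using lim lorentz_norm_tendsto_0_iff[OF d_in] unfolding d_def by simp
  moreover have "(\<lambda>n. lorentz_sum w p (tail_seq (r n) y)) \<longlonglongrightarrow> 0"
    using LIMSEQ_subseq_LIMSEQ[OF lorentz_sum_tail_seq_tendsto_0[OF y] r] by (simp add: o_def)
  ultimately have majorant:
    "(\<lambda>n. 2 * 2 powr p * (lorentz_sum w p (d n) + lorentz_sum w p (tail_seq (r n) y))) \<longlonglongrightarrow> 0"
    using tendsto_mult_right_zero tendsto_add_zero by blast
  define t where "t n = tail_seq (r n) (T (xs (r n)))" for n
  have t: "t n \<in> lorentz_space w p \<and>
      lorentz_sum w p (t n) \<le> 2 * 2 powr p * (lorentz_sum w p (d n) + lorentz_sum w p (tail_seq (r n) y))"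
    for n
  proof -
    have y0: "y \<longlonglongrightarrow> 0" using y mem_lorentz_space by blast
    have tail_y: "tail_seq (r n) y \<in> lorentz_space w p"
      using lorentz_dominated[OF y tail_seq_tendsto_0[OF y0] abs_tail_seq_le] by blast
    have le: "\<bar>t n k\<bar> \<le> \<bar>d n k\<bar> + \<bar>tail_seq (r n) y k\<bar>" for k
      unfolding t_def d_def tail_seq_def by auto
    have "T (xs (r n)) \<longlonglongrightarrow> 0" using T_in[OF xs(1)] mem_lorentz_space by blast
    then show ?thesis unfolding t_def
      by (intro lorentz_quasi_triangle[OF d_in tail_y tail_seq_tendsto_0] le[unfolded t_def])
  qed
  have "(\<lambda>n. lorentz_sum w p (t n)) \<longlonglongrightarrow> 0"
  proof (rule real_tendsto_sandwich[OF always_eventually always_eventually tendsto_const majorant])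
    show "\<forall>n. 0 \<le> lorentz_sum w p (t n)" using t lorentz_sum_nonneg by blast
    show "\<forall>n. lorentz_sum w p (t n)
        \<le> 2 * 2 powr p * (lorentz_sum w p (d n) + lorentz_sum w p (tail_seq (r n) y))"
      using t by blast
  qed
  then have "(\<lambda>n. lorentz_norm w p (t n)) \<longlonglongrightarrow> 0"
    using lorentz_norm_tendsto_0_iff[of t] t by blast
  moreover have "e \<le> lorentz_norm w p (t n)" for n
    using xs(3)[of "r n"] unfolding t_def by simp
  ultimately have "e \<le> 0" using LIMSEQ_le_const by blast
  then show False using e by simp
qed

text \<open>The finite-rank truncation maps the Lorentz space boundedly into \<open>\<ell>\<^sub>p\<close>, since each
  coordinate is bounded by the Lorentz norm.\<close>
lemma head_seq_comp_factors_through_lp: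
  assumes T: "lorentz_op w p T"
  shows "factors_through_lp w p (\<lambda>x. head_seq N (T x))"
proof -
  have T_in: "\<And>x. x \<in> lorentz_space w p \<Longrightarrow> T x \<in> lorentz_space w p"
    and T_add: "\<And>x y. x \<in> lorentz_space w p \<Longrightarrow> y \<in> lorentz_space w p \<Longrightarrow> T (\<lambda>n. x n + y n) = (\<lambda>n. T x n + T y n)"
    and T_scale: "\<And>x c. x \<in> lorentz_space w p \<Longrightarrow> T (\<lambda>n. c * x n) = (\<lambda>n. c * T x n)"
    using T unfolding lorentz_op_def bdd_lin_op_def by blast+
  obtain C where T_bdd: "\<And>x. x \<in> lorentz_space w p \<Longrightarrow> lorentz_norm w p (T x) \<le> C * lorentz_norm w p x"
    using T unfolding lorentz_op_def bdd_lin_op_def by blast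
  define S where "S x = head_seq N (T x)" for x
  have S_add: "S (\<lambda>n. x n + y n) = (\<lambda>n. S x n + S y n)"
    if "x \<in> lorentz_space w p" "y \<in> lorentz_space w p" for x y
    unfolding S_def T_add[OF that] head_seq_def by auto
  have S_scale: "S (\<lambda>n. c * x n) = (\<lambda>n. c * S x n)" if "x \<in> lorentz_space w p" for x c
    unfolding S_def T_scale[OF that] head_seq_def by auto
  have S_lp: "S x \<in> lp_space p \<and> lp_norm p (S x) \<le> (real N powr (1/p) * C) * lorentz_norm w p x"
    if x: "x \<in> lorentz_space w p" for x
  proof -
    have zero: "k \<notin> {..<N} \<Longrightarrow> \<bar>S x k\<bar> powr p = 0" for k unfolding S_def head_seq_def by auto
    then have summable: "summable (\<lambda>k. \<bar>S x k\<bar> powr p)"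
      using summable_finite[of "{..<N}" "\<lambda>k. \<bar>S x k\<bar> powr p"] by blast
    have "(\<Sum>k. \<bar>S x k\<bar> powr p) = (\<Sum>k<N. \<bar>S x k\<bar> powr p)"
      using suminf_finite[of "{..<N}" "\<lambda>k. \<bar>S x k\<bar> powr p"] zero by blast
    also have "\<dots> \<le> real N * lorentz_sum w p (T x)"
      using sum_mono[of "{..<N}" "\<lambda>k. \<bar>S x k\<bar> powr p" "\<lambda>_. lorentz_sum w p (T x)"]
        abs_powr_le_lorentz_sum[OF T_in[OF x]] unfolding S_def head_seq_def by auto
    finally have "lp_norm p (S x) \<le> (real N * lorentz_sum w p (T x)) powr (1/p)"
      unfolding lp_norm_def using p_pos summable by (intro powr_mono2) (auto intro: suminf_nonneg)
    also have "\<dots> = real N powr (1/p) * lorentz_norm w p (T x)"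
      unfolding lorentz_norm_eq_lorentz_sum_powr using lorentz_sum_nonneg[OF T_in[OF x]] by (simp add: powr_mult)
    also have "\<dots> \<le> real N powr (1/p) * (C * lorentz_norm w p x)"
      using T_bdd[OF x] by (intro mult_left_mono) auto
    finally show ?thesis using summable unfolding lp_space_def by (simp add: mult.assoc)
  qed
  have "bdd_lin_op (lorentz_space w p) (lorentz_norm w p) (lp_space p) (lp_norm p) S"
    unfolding bdd_lin_op_def using S_lp S_add S_scale by blast
  then show ?thesis unfolding S_def by (rule bdd_lin_op_into_lp_factors_through_lp)
qed

lemma compact_imp_in_closure_J_lp:
  assumes T: "compact_lorentz_op w p T"
  shows "in_closure_J_lp w p T"
  unfolding in_closure_J_lp_def
proof (intro conjI allI impI)
  show T_op: "lorentz_op w p T" using T unfolding compact_lorentz_op_def by simp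
  fix e :: real assume "0 < e"
  then obtain N where N: "\<forall>x\<in>lorentz_space w p. lorentz_norm w p x \<le> 1 \<longrightarrow> lorentz_norm w p (tail_seq N (T x)) \<le> e/2"
    using compact_op_tails_uniformly_small[OF T, of "e/2"] by auto
  have tail: "(\<lambda>x n. T x n - head_seq N (T x) n) = (\<lambda>x. tail_seq N (T x))"
    unfolding head_seq_def tail_seq_def by (auto simp: fun_eq_iff)
  have "lorentz_opnorm w p (\<lambda>x n. T x n - head_seq N (T x) n) \<le> e/2"
    unfolding tail lorentz_opnorm_def by (rule cSUP_least[OF lorentz_unit_ball_nonempty]) (use N in auto)
  then show "\<exists>S. factors_through_lp w p S \<and> lorentz_opnorm w p (\<lambda>x n. T x n - S x n) < e"
    using head_seq_comp_factors_through_lp[OF T_op] \<open>0 < e\<close> by (intro exI[of _ "\<lambda>x. head_seq N (T x)"]) auto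
qed

end

section \<open>An operator through \<open>\<ell>\<^sub>p\<close> that is not compact\<close>

text \<open>The partial sums of \<open>w\<close> at least double from one block boundary to the next; as \<open>w\<close> is
  not summable, a next boundary always exists. Then each block carries at least half of the weight
  up to its right end.\<close>
primrec block_bound :: "(nat \<Rightarrow> real) \<Rightarrow> nat \<Rightarrow> nat" where
  "block_bound w 0 = 0"
| "block_bound w (Suc j) =
    (SOME m. block_bound w j < m \<and> 2 * (\<Sum>n<block_bound w j. w n) \<le> (\<Sum>n<m. w n))"

declare block_bound.simps(2)[simp del]

locale lorentz_blocks = lorentz_weight +
  assumes weight_not_summable: "\<not> summable w"
begin

lemma weight_sum_mono: "a \<le> b \<Longrightarrow> (\<Sum>n<a. w n) \<le> (\<Sum>n<b. w n)"
  using weight_nonneg by (intro sum_mono2) auto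

lemma one_le_weight_sum: "1 \<le> m \<Longrightarrow> 1 \<le> (\<Sum>n<m. w n)"
  using weight_sum_mono[of 1 m] weight_0 by simp

lemma weight_sum_unbounded: "\<exists>m. B \<le> (\<Sum>n<m. w n)"
proof (rule ccontr)
  assume "\<not> ?thesis"
  then have "summable w"
    using weight_nonneg by (intro summableI_nonneg_bounded[of _ B]) (auto simp: not_le less_imp_le)
  then show False using weight_not_summable by simp
qed

lemma block_bound_step:
  "block_bound w j < block_bound w (Suc j) \<and> 2 * (\<Sum>n<block_bound w j. w n) \<le> (\<Sum>n<block_bound w (Suc j). w n)"
proof -
  obtain m where m: "2 * (\<Sum>n<block_bound w j. w n) \<le> (\<Sum>n<m. w n)" using weight_sum_unbounded by blast
  define m' where "m' = max m (Suc (block_bound w j))"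
  have "block_bound w j < m' \<and> 2 * (\<Sum>n<block_bound w j. w n) \<le> (\<Sum>n<m'. w n)"
    using m weight_sum_mono[of m m'] unfolding m'_def by auto
  then show ?thesis unfolding block_bound.simps(2) by (rule someI)
qed

lemma block_bound_strict_mono: "strict_mono (block_bound w)"
  using block_bound_step by (simp add: strict_mono_Suc_iff)

definition weight_block :: "nat \<Rightarrow> nat set" where
  "weight_block j = {block_bound w j..<block_bound w (Suc j)}"

definition block_weight :: "nat \<Rightarrow> real" where
  "block_weight j = (\<Sum>n\<in>weight_block j. w n)"

lemma weight_sum_le_block_weight: "(\<Sum>n<block_bound w (Suc j). w n) \<le> 2 * block_weight j"
proof -
  have "(\<Sum>n<block_bound w (Suc j). w n) = (\<Sum>n<block_bound w j. w n) + block_weight j"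
    using block_bound_step[of j] unfolding block_weight_def weight_block_def
    by (intro sum_lessThan_split) simp
  then show ?thesis using block_bound_step[of j] by simp
qed

lemma block_weight_ge_half: "1/2 \<le> block_weight j"
  using weight_sum_le_block_weight[of j] one_le_weight_sum[of "block_bound w (Suc j)"] block_bound_step[of j]
  by simp

lemma weight_sum_card_block:
  "1 \<le> (\<Sum>n<card (weight_block j). w n) \<and> (\<Sum>n<card (weight_block j). w n) \<le> 2 * block_weight j"
  using one_le_weight_sum[of "card (weight_block j)"] weight_sum_mono[of "card (weight_block j)" "block_bound w (Suc j)"]
    weight_sum_le_block_weight[of j] block_bound_step[of j]
  unfolding weight_block_def by auto

lemma weight_blocks_disjoint: "i \<noteq> j \<Longrightarrow> weight_block i \<inter> weight_block j = {}"
proof -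
  have "weight_block i \<inter> weight_block j = {}" if "i < j" for i j
  proof -
    have "block_bound w (Suc i) \<le> block_bound w j"
      using that block_bound_strict_mono by (metis Suc_leI strict_mono_less_eq)
    then show ?thesis unfolding weight_block_def by auto
  qed
  then show "i \<noteq> j \<Longrightarrow> weight_block i \<inter> weight_block j = {}" by (metis inf_commute nat_neq_iff)
qed

lemma sum_weight_blocks: "(\<Sum>j<J. \<Sum>n\<in>weight_block j. f n) = (\<Sum>n<block_bound w J. f n)"
proof (induct J)
  case (Suc J)
  then show ?case using block_bound_step[of J] sum_lessThan_split[of "block_bound w J" "block_bound w (Suc J)" f]
    unfolding weight_block_def by simp
qed simp

definition block_avg_op :: "(nat \<Rightarrow> real) \<Rightarrow> nat \<Rightarrow> real" where
  "block_avg_op x j = block_weight j powr (1/p - 1) * (\<Sum>n\<in>weight_block j. w n * x n)"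

text \<open>The power mean inequality; the normalisation \<open>block_weight j powr (1/p - 1)\<close> cancels the
  factor \<open>block_weight j powr (p - 1)\<close> it produces.\<close>
lemma abs_block_avg_op_powr_le: "\<bar>block_avg_op x j\<bar> powr p \<le> (\<Sum>n\<in>weight_block j. w n * \<bar>x n\<bar> powr p)"
proof -
  define S where "S = block_weight j"
  have S: "0 < S" using block_weight_ge_half[of j] S_def by simp
  have "\<bar>\<Sum>n\<in>weight_block j. w n * x n\<bar> \<le> (\<Sum>n\<in>weight_block j. w n * \<bar>x n\<bar>)"
    using sum_abs[of "\<lambda>n. w n * x n" "weight_block j"] weight_nonneg by (simp add: abs_mult)
  then have "\<bar>block_avg_op x j\<bar> powr p \<le> S powr ((1/p - 1) * p) * (\<Sum>n\<in>weight_block j. w n * \<bar>x n\<bar>) powr p"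
    unfolding block_avg_op_def S_def[symmetric] using S p_pos
    by (simp add: abs_mult powr_mult powr_powr mult_left_mono powr_mono2)
  also have "\<dots> \<le> S powr ((1/p - 1) * p) * (S powr (p - 1) * (\<Sum>n\<in>weight_block j. w n * \<bar>x n\<bar> powr p))"
    using weighted_power_mean_le[OF one_le_p _ weight_nonneg, where R = "weight_block j" and x = x] S
    unfolding S_def block_weight_def weight_block_def by (intro mult_left_mono) auto
  also have "\<dots> = (\<Sum>n\<in>weight_block j. w n * \<bar>x n\<bar> powr p)"
    using S p_pos by (simp add: powr_add[symmetric] mult.assoc[symmetric] algebra_simps)
  finally show ?thesis .
qed

lemma block_avg_op_lp_bound:
  assumes x: "x \<in> lorentz_space w p"
  shows "summable (\<lambda>j. \<bar>block_avg_op x j\<bar> powr p) \<and> (\<Sum>j. \<bar>block_avg_op x j\<bar> powr p) \<le> lorentz_sum w p x"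
proof -
  have x0: "x \<longlonglongrightarrow> 0" and sx: "summable (\<lambda>n. w n * dec_rearr x n powr p)"
    using x mem_lorentz_space by auto
  have partial: "(\<Sum>j<J. \<bar>block_avg_op x j\<bar> powr p) \<le> lorentz_sum w p x" for J
  proof -
    have "(\<Sum>j<J. \<bar>block_avg_op x j\<bar> powr p) \<le> (\<Sum>j<J. \<Sum>n\<in>weight_block j. w n * \<bar>x n\<bar> powr p)"
      by (intro sum_mono abs_block_avg_op_powr_le)
    also have "\<dots> = (\<Sum>n<block_bound w J. w n * \<bar>x n\<bar> powr p)" by (rule sum_weight_blocks)
    also have "\<dots> \<le> (\<Sum>n<block_bound w J. w n * dec_rearr x n powr p)"
      by (rule sum_weighted_abs_powr_le_dec_rearr[OF x0])
    also have "\<dots> \<le> lorentz_sum w p x" unfolding lorentz_sum_def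
      by (rule sum_le_suminf[OF sx]) (auto intro: lorentz_summand_nonneg)
    finally show ?thesis .
  qed
  have "summable (\<lambda>j. \<bar>block_avg_op x j\<bar> powr p)" by (rule summableI_nonneg_bounded[OF _ partial]) simp
  then show ?thesis using suminf_le_const[OF _ partial] by simp
qed

lemma block_avg_op_bdd_lin_op:
  "bdd_lin_op (lorentz_space w p) (lorentz_norm w p) (lp_space p) (lp_norm p) block_avg_op"
proof -
  have "block_avg_op x \<in> lp_space p \<and> lp_norm p (block_avg_op x) \<le> 1 * lorentz_norm w p x"
    if x: "x \<in> lorentz_space w p" for x
    using block_avg_op_lp_bound[OF x] p_pos suminf_nonneg[of "\<lambda>j. \<bar>block_avg_op x j\<bar> powr p"]
    unfolding lp_space_def lp_norm_def lorentz_norm_eq_lorentz_sum_powr by (simp add: powr_mono2)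
  moreover have "block_avg_op (\<lambda>n. x n + y n) = (\<lambda>n. block_avg_op x n + block_avg_op y n)" for x y
    unfolding block_avg_op_def by (simp add: algebra_simps sum.distrib fun_eq_iff)
  moreover have "block_avg_op (\<lambda>n. c * x n) = (\<lambda>n. c * block_avg_op x n)" for x c
    unfolding block_avg_op_def by (simp add: algebra_simps sum_distrib_left fun_eq_iff)
  ultimately show ?thesis unfolding bdd_lin_op_def by blast
qed

definition block_vec :: "nat \<Rightarrow> nat \<Rightarrow> real" where
  "block_vec j n = (if n \<in> weight_block j then (\<Sum>m<card (weight_block j). w m) powr (-1/p) else 0)"

text \<open>The rearrangement of \<open>block_vec j\<close> is its height \<open>W powr (-1/p)\<close> on the first \<open>card (weight_block j)\<close>
  places, where \<open>W\<close> is the weight sum over these places; so its Lorentz sum is at most \<open>1\<close>.\<close>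
lemma block_vec_lorentz: "block_vec j \<in> lorentz_space w p \<and> lorentz_sum w p (block_vec j) \<le> 1"
proof -
  define W where "W = (\<Sum>m<card (weight_block j). w m)"
  define c where "c = W powr (-1/p)"
  have W: "1 \<le> W" using weight_sum_card_block W_def by simp
  have u: "block_vec j = (\<lambda>n. if n \<in> weight_block j then c else 0)"
    unfolding block_vec_def c_def W_def by auto
  have u0: "block_vec j \<longlonglongrightarrow> 0"
    by (rule tendsto_eventually) (auto simp: u eventually_sequentially weight_block_def
        intro: exI[of _ "block_bound w (Suc j)"])
  have Bu: "Bseq (block_vec j)" using u0 by (rule tendsto_0_imp_Bseq)
  have term_le: "w n * dec_rearr (block_vec j) n powr p \<le> (if n < card (weight_block j) then w n * c powr p else 0)" for n
  proof (cases "n < card (weight_block j)")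
    case True
    have "dec_rearr (block_vec j) n \<le> c" using W by (intro dec_rearr_le_bound) (auto simp: u c_def)
    then show ?thesis using True dec_rearr_nonneg[OF Bu] weight_nonneg p_pos
      by (auto intro!: mult_left_mono powr_mono2)
  next
    case False
    then have "dec_rearr (block_vec j) n = 0"
      by (intro dec_rearr_eq_0_if_support_le[OF Bu, of "weight_block j"]) (auto simp: u weight_block_def)
    then show ?thesis using False p_pos by simp
  qed
  have "(\<Sum>n<N. w n * dec_rearr (block_vec j) n powr p) \<le> 1" for N
  proof -
    have "(\<Sum>n<N. w n * dec_rearr (block_vec j) n powr p)
        \<le> (\<Sum>n<N. if n < card (weight_block j) then w n * c powr p else 0)"
      by (rule sum_mono[OF term_le])
    also have "\<dots> = (\<Sum>n\<in>{..<N} \<inter> {n. n < card (weight_block j)}. w n * c powr p)"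
      by (simp add: sum.If_cases)
    also have "\<dots> \<le> (\<Sum>n<card (weight_block j). w n * c powr p)"
      using weight_nonneg by (intro sum_mono2) auto
    also have "\<dots> = W * c powr p" unfolding W_def by (simp add: sum_distrib_right)
    also have "\<dots> = W * W powr ((-1/p) * p)" unfolding c_def by (simp add: powr_powr)
    also have "\<dots> = 1" using W p_pos by (simp add: powr_minus)
    finally show ?thesis .
  qed
  then show ?thesis by (rule lorentz_sum_le_if_partial_sums_le[OF _ u0])
qed

lemma block_avg_op_block_vec_off_diag: "i \<noteq> j \<Longrightarrow> block_avg_op (block_vec j) i = 0"
  using weight_blocks_disjoint[of i j] unfolding block_avg_op_def block_vec_def
  by (auto intro!: sum.neutral)

lemma block_avg_op_block_vec_diag: "1/2 \<le> \<bar>block_avg_op (block_vec j) j\<bar> powr p"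
proof -
  define S where "S = block_weight j"
  define W where "W = (\<Sum>m<card (weight_block j). w m)"
  have S: "0 < S" using block_weight_ge_half[of j] S_def by simp
  have W: "1 \<le> W" "W \<le> 2 * S" using weight_sum_card_block[of j] W_def S_def by auto
  have "block_avg_op (block_vec j) j = S powr (1/p - 1) * (S * W powr (-1/p))"
    unfolding block_avg_op_def block_vec_def S_def W_def block_weight_def
    by (simp add: sum_distrib_right)
  also have "\<dots> = S powr (1/p) * W powr (-1/p)" using S by (simp add: powr_diff)
  also have "\<dots> = S powr (1/p) / W powr (1/p)" using W by (simp add: powr_minus divide_inverse)
  also have "\<dots> = (S / W) powr (1/p)" using S W by (simp add: powr_divide)
  finally have "\<bar>block_avg_op (block_vec j) j\<bar> powr p = S / W"
    using S W p_pos by (simp add: powr_powr)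
  moreover have "1/2 \<le> S / W" using W by (simp add: field_simps)
  ultimately show ?thesis by simp
qed

lemma block_avg_op_not_compact: "\<not> compact_lorentz_op w p block_avg_op"
proof
  assume compact: "compact_lorentz_op w p block_avg_op"
  have "lorentz_norm w p (block_vec j) \<le> 1 powr (1/p)" for j
    using block_vec_lorentz[of j] lorentz_sum_nonneg p_pos unfolding lorentz_norm_eq_lorentz_sum_powr
    by (intro powr_mono2) auto
  then have "lorentz_norm w p (block_vec j) \<le> 1" for j by simp
  then obtain r y where r: "strict_mono r" and y: "y \<in> lorentz_space w p"
    and lim: "(\<lambda>n. lorentz_norm w p (\<lambda>k. block_avg_op (block_vec (r n)) k - y k)) \<longlonglongrightarrow> 0"
    using compact block_vec_lorentz unfolding compact_lorentz_op_def by blast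
  define z where "z n = (\<lambda>k. block_avg_op (block_vec (r n)) k - y k)" for n
  have image_in: "block_avg_op (block_vec j) \<in> lorentz_space w p" for j
    using compact block_vec_lorentz unfolding compact_lorentz_op_def lorentz_op_def bdd_lin_op_def by blast
  have z_in: "z n \<in> lorentz_space w p" for n unfolding z_def by (rule lorentz_diff[OF image_in y])
  have z_lim: "(\<lambda>n. lorentz_sum w p (z n)) \<longlonglongrightarrow> 0"
    using lim lorentz_norm_tendsto_0_iff[OF z_in] unfolding z_def by simp
  have y_zero: "y k = 0" for k
  proof -
    have "\<bar>y k\<bar> powr p \<le> lorentz_sum w p (z n)" if "Suc k \<le> n" for n
    proof -
      have "k < r n" using seq_suble[OF r, of n] that by simp
      then have "z n k = - y k" unfolding z_def using block_avg_op_block_vec_off_diag by simp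
      then show ?thesis using abs_powr_le_lorentz_sum[OF z_in[of n], of k] by simp
    qed
    then have "\<bar>y k\<bar> powr p \<le> 0" by (intro LIMSEQ_le_const[OF z_lim]) blast
    then show ?thesis by simp
  qed
  have "1/2 \<le> lorentz_sum w p (z n)" for n
    using abs_powr_le_lorentz_sum[OF z_in[of n], of "r n"] block_avg_op_block_vec_diag[of "r n"] y_zero
    unfolding z_def by simp
  then have "1/2 \<le> (0::real)" by (intro LIMSEQ_le_const[OF z_lim]) blast
  then show False by simp
qed

end

theorem corollary2p5:
  fixes w :: "nat \<Rightarrow> real" and p :: real
  assumes "1 \<le> p"
    and "w 0 = 1"
    and "decseq w"
    and "w \<longlonglongrightarrow> 0"
    and "\<not> summable w"
  shows "(\<forall>T. compact_lorentz_op w p T \<longrightarrow> in_closure_J_lp w p T) \<and>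
         (\<exists>T. in_closure_J_lp w p T \<and> \<not> compact_lorentz_op w p T)"
proof -
  interpret lorentz_blocks w p using assms by unfold_locales auto
  have "in_closure_J_lp w p block_avg_op"
    by (intro factors_through_lp_imp_in_closure_J_lp bdd_lin_op_into_lp_factors_through_lp
        block_avg_op_bdd_lin_op)
  then show ?thesis using compact_imp_in_closure_J_lp block_avg_op_not_compact by blast
qed

end
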